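(* Let $G$ be a td-group acting isometrically, properly, cocompactly and smoothly on a locally compact CAT(0)-space $X$. Let $\mathcal{A}$ be a collection of closed convex subspaces of $X$ such that: (a) for all $A,A'\in\mathcal{A}$ there is $g\in G$ with $g(A)=A'$ and $g|_{A\cap A'}=\mathrm{id}_{A\cap A'}$; (b) for every $A\in\mathcal{A}$ the quotient $\Gamma_A=\{g\in G\mid gA=A\}/\{g\in G\mid g|_A=\mathrm{id}_A\}$ is discrete; (c) for any $x,y\in X$ there is $A\in\mathcal{A}$ with $x,y\in A$. Then for every $A\in\mathcal{A}$ we have $G\cdot \mathrm{FS}(A)=\mathrm{FS}(X)$.
   Context: A td-group is a topological group in which the identity admits a countable neighborhood basis of compact open subgroups. An action is smooth if all isotropy groups are open. A generalized geodesic in $X$ is a continuous map $c\colon\mathbb{R}\to X$ for which there is an open interval $U\subseteq\mathbb{R}$ (possibly unbounded, possibly all of $\mathbb{R}$) such that $c|_U$ is an isometric embedding and $c|_{\mathbb{R}\setminus U}$ is locally constant. The flow space $\mathrm{FS}(X)$ is the space of all generalized geodesics with metric $d_{\mathrm{FS}}(c,c')=\int_{\mathbb{R}} d_X(c(t),c'(t))\,2e^{-|t|}\,dt$, and $G$ acts by $(gc)(t)=g(c(t))$. For $A\subseteq X$, $\mathrm{FS}(A)\subseteq\mathrm{FS}(X)$ is the subspace of generalized geodesics with image in $A$. $\Gamma_A$ carries the quotient topology. *)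

theory Defs
  imports "HOL-Analysis.Analysis" "HOL-Algebra.Coset"
begin

definition topological_group :: "('g, 'm) monoid_scheme \<Rightarrow> 'g topology \<Rightarrow> bool" where
  "topological_group G T \<longleftrightarrow> group G \<and> topspace T = carrier G \<and>
     continuous_map (prod_topology T T) T (\<lambda>(x, y). x \<otimes>\<^bsub>G\<^esub> y) \<and>
     continuous_map T T (\<lambda>x. inv\<^bsub>G\<^esub> x)"

definition td_group :: "('g, 'm) monoid_scheme \<Rightarrow> 'g topology \<Rightarrow> bool" where
  "td_group G T \<longleftrightarrow> topological_group G T \<and>
     (\<exists>U :: nat \<Rightarrow> 'g set.
        (\<forall>n. subgroup (U n) G \<and> compactin T (U n) \<and> openin T (U n)) \<and>
        (\<forall>W. openin T W \<and> \<one>\<^bsub>G\<^esub> \<in> W \<longrightarrow> (\<exists>n. U n \<subseteq> W)))"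

definition group_act :: "('g, 'm) monoid_scheme \<Rightarrow> ('g \<Rightarrow> 'x \<Rightarrow> 'x) \<Rightarrow> bool" where
  "group_act G act \<longleftrightarrow> (\<forall>x. act \<one>\<^bsub>G\<^esub> x = x) \<and>
     (\<forall>g\<in>carrier G. \<forall>h\<in>carrier G. \<forall>x. act (g \<otimes>\<^bsub>G\<^esub> h) x = act g (act h x))"

definition isometric_act :: "('g, 'm) monoid_scheme \<Rightarrow> ('g \<Rightarrow> 'x::metric_space \<Rightarrow> 'x) \<Rightarrow> bool" where
  "isometric_act G act \<longleftrightarrow> group_act G act \<and>
     (\<forall>g\<in>carrier G. \<forall>x y. dist (act g x) (act g y) = dist x y)"

definition proper_act :: "('g, 'm) monoid_scheme \<Rightarrow> 'g topology \<Rightarrow> ('g \<Rightarrow> 'x::metric_space \<Rightarrow> 'x) \<Rightarrow> bool" where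
  "proper_act G T act \<longleftrightarrow>
     continuous_map (prod_topology T euclidean) euclidean (\<lambda>(g, x). act g x) \<and>
     (\<forall>K. compact K \<longrightarrow> compactin T {g \<in> carrier G. act g ` K \<inter> K \<noteq> {}})"

definition cocompact_act :: "('g, 'm) monoid_scheme \<Rightarrow> ('g \<Rightarrow> 'x::topological_space \<Rightarrow> 'x) \<Rightarrow> bool" where
  "cocompact_act G act \<longleftrightarrow> (\<exists>K. compact K \<and> (\<Union>g\<in>carrier G. act g ` K) = UNIV)"

definition smooth_act :: "('g, 'm) monoid_scheme \<Rightarrow> 'g topology \<Rightarrow> ('g \<Rightarrow> 'x \<Rightarrow> 'x) \<Rightarrow> bool" where
  "smooth_act G T act \<longleftrightarrow> (\<forall>x. openin T {g \<in> carrier G. act g x = x})"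

definition isometric_on :: "real set \<Rightarrow> (real \<Rightarrow> 'x::metric_space) \<Rightarrow> bool" where
  "isometric_on S f \<longleftrightarrow> (\<forall>s\<in>S. \<forall>t\<in>S. dist (f s) (f t) = dist s t)"

definition geodesic_from :: "(real \<Rightarrow> 'x::metric_space) \<Rightarrow> 'x \<Rightarrow> 'x \<Rightarrow> bool" where
  "geodesic_from \<gamma> x y \<longleftrightarrow> \<gamma> 0 = x \<and> \<gamma> (dist x y) = y \<and> isometric_on {0..dist x y} \<gamma>"

definition geodesic_space :: "'x::metric_space itself \<Rightarrow> bool" where
  "geodesic_space _ \<longleftrightarrow> (\<forall>x y :: 'x. \<exists>\<gamma>. geodesic_from \<gamma> x y)"

text \<open>CAT(0): geodesic, and for every geodesic triangle, the distance between two points on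
  the triangle is at most the distance of the comparison points in a Euclidean comparison
  triangle (Euclidean plane = complex numbers).  Two points of a triangle always lie on two
  sides sharing a vertex x (or on a single side, where the inequality is an equality).\<close>
definition CAT0 :: "'x::metric_space itself \<Rightarrow> bool" where
  "CAT0 TYPE('x) \<longleftrightarrow> geodesic_space TYPE('x) \<and>
     (\<forall>(x::'x) y z \<gamma>1 \<gamma>2 s t (a::complex) b c.
        geodesic_from \<gamma>1 x y \<and> geodesic_from \<gamma>2 x z \<and>
        s \<in> {0..dist x y} \<and> t \<in> {0..dist x z} \<and>
        dist a b = dist x y \<and> dist a c = dist x z \<and> dist b c = dist y z \<longrightarrow>
        dist (\<gamma>1 s) (\<gamma>2 t) \<le>
          dist (a + of_real (s / dist a b) * (b - a)) (a + of_real (t / dist a c) * (c - a)))"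

definition convex_subspace :: "'x::metric_space set \<Rightarrow> bool" where
  "convex_subspace A \<longleftrightarrow> (\<forall>x\<in>A. \<forall>y\<in>A. \<forall>\<gamma>. geodesic_from \<gamma> x y \<longrightarrow> \<gamma> ` {0..dist x y} \<subseteq> A)"

definition locally_constant_on :: "real set \<Rightarrow> (real \<Rightarrow> 'x) \<Rightarrow> bool" where
  "locally_constant_on S f \<longleftrightarrow> (\<forall>t\<in>S. \<exists>e>0. \<forall>s\<in>S. \<bar>s - t\<bar> < e \<longrightarrow> f s = f t)"

definition generalized_geodesic :: "(real \<Rightarrow> 'x::metric_space) \<Rightarrow> bool" where
  "generalized_geodesic c \<longleftrightarrow> continuous_on UNIV c \<and>
     (\<exists>a b :: ereal. a \<le> b \<and>
        (let U = {t. a < ereal t \<and> ereal t < b} in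
           isometric_on U c \<and> locally_constant_on (- U) c))"

definition FS :: "'x::metric_space set \<Rightarrow> (real \<Rightarrow> 'x) set" where
  "FS A = {c. generalized_geodesic c \<and> range c \<subseteq> A}"

definition orbit_set :: "('g, 'm) monoid_scheme \<Rightarrow> ('g \<Rightarrow> 'x \<Rightarrow> 'x) \<Rightarrow> (real \<Rightarrow> 'x) set \<Rightarrow> (real \<Rightarrow> 'x) set" where
  "orbit_set G act C = {(\<lambda>t. act g (c t)) | g c. g \<in> carrier G \<and> c \<in> C}"

definition setwise_stab :: "('g, 'm) monoid_scheme \<Rightarrow> ('g \<Rightarrow> 'x \<Rightarrow> 'x) \<Rightarrow> 'x set \<Rightarrow> 'g set" where
  "setwise_stab G act A = {g \<in> carrier G. act g ` A = A}"

definition pointwise_fix :: "('g, 'm) monoid_scheme \<Rightarrow> ('g \<Rightarrow> 'x \<Rightarrow> 'x) \<Rightarrow> 'x set \<Rightarrow> 'g set" where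
  "pointwise_fix G act A = {g \<in> carrier G. \<forall>x\<in>A. act g x = x}"

definition quotient_topology :: "'a topology \<Rightarrow> ('a \<Rightarrow> 'b) \<Rightarrow> 'b topology" where
  "quotient_topology X q =
     topology (\<lambda>V. V \<subseteq> q ` topspace X \<and> openin X {x \<in> topspace X. q x \<in> V})"

definition Gamma_discrete :: "('g, 'm) monoid_scheme \<Rightarrow> 'g topology \<Rightarrow> ('g \<Rightarrow> 'x \<Rightarrow> 'x) \<Rightarrow> 'x set \<Rightarrow> bool" where
  "Gamma_discrete G T act A \<longleftrightarrow>
     (let S = setwise_stab G act A; q = (\<lambda>g. pointwise_fix G act A #>\<^bsub>G\<^esub> g) in
        quotient_topology (subtopology T S) q = discrete_topology (q ` S))"

end

theory Submission
  imports Defs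
begin

(*
  Fix a generalized geodesic c and a member A0 of the collection containing c(0).  By (c) and
  convexity, every window c[-n, n] lies in some A_n, and by (a) there is g_n with g_n A_n = A0
  fixing A_n \<inter> A0, in particular fixing c(0).  All g_n lie in the stabiliser of c(0), which is
  compact because the action is proper, and the sets of its elements mapping c[-n, n] into the
  closed set A0 form a decreasing sequence of nonempty closed sets.  An element g of their
  intersection maps all of c into A0, and composing with an element from (a) carrying A0 onto A
  moves c into FS(A).
*)

lemma locally_constant_on_imp_constant_on_interval:
  fixes f :: "real \<Rightarrow> 'x"
  assumes lc: "locally_constant_on S f" and L: "is_interval L" "L \<subseteq> S" "s \<in> L" "t \<in> L"
  shows "f s = f t"
proof -
  have "f constant_on L"
  proof (rule locally_constant_imp_constant)
    show "connected L" using L(1) is_interval_connected by blast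
    fix r assume "r \<in> L"
    then obtain e where e: "e > 0" "\<forall>s\<in>S. \<bar>s - r\<bar> < e \<longrightarrow> f s = f r"
      using lc L(2) unfolding locally_constant_on_def by blast
    have "openin (top_of_set L) (L \<inter> ball r e)" by (rule openin_open_Int) simp
    moreover have "\<forall>x\<in>L \<inter> ball r e. f x = f r"
      using e(2) L(2) by (auto simp: dist_real_def abs_minus_commute)
    moreover have "r \<in> L \<inter> ball r e" using \<open>r \<in> L\<close> e(1) by simp
    ultimately show "\<exists>V. openin (top_of_set L) V \<and> r \<in> V \<and> (\<forall>x\<in>V. f x = f r)"
      by blast
  qed
  then show ?thesis using L unfolding constant_on_def by metis
qed

lemma is_interval_ereal_le: "is_interval {t. ereal t \<le> a}"
  unfolding is_interval_1 by (simp, meson ereal_less_eq(3) order_trans)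

lemma is_interval_ereal_ge: "is_interval {t. a \<le> ereal t}"
  unfolding is_interval_1 by (simp, meson ereal_less_eq(3) order_trans)

lemma isometric_on_subset: "isometric_on U c \<Longrightarrow> V \<subseteq> U \<Longrightarrow> isometric_on V c"
  unfolding isometric_on_def by blast

lemma isometric_on_closure:
  fixes c :: "real \<Rightarrow> 'x::metric_space"
  assumes cont: "continuous_on UNIV c" and iso: "isometric_on U c"
  shows "isometric_on (closure U) c"
proof -
  let ?E = "{p. dist (c (fst p)) (c (snd p)) = dist (fst p) (snd p)}"
  have "continuous_on UNIV (\<lambda>p. c (fst p))" "continuous_on UNIV (\<lambda>p. c (snd p))"
    by (auto intro!: continuous_on_compose2[OF cont] continuous_intros)
  then have "closed ?E"
    by (intro closed_Collect_eq continuous_intros) auto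
  moreover have "U \<times> U \<subseteq> ?E" using iso unfolding isometric_on_def by auto
  ultimately have "closure U \<times> closure U \<subseteq> ?E"
    by (metis closure_Times closure_minimal)
  then show ?thesis unfolding isometric_on_def by auto
qed

lemma isometric_on_atLeastAtMost:
  fixes c :: "real \<Rightarrow> 'x::metric_space"
  assumes "continuous_on UNIV c" "isometric_on {p<..<q} c"
  shows "isometric_on {p..q} c"
proof (cases "p < q")
  case True
  then show ?thesis using isometric_on_closure[OF assms] by simp
next
  case False
  show ?thesis unfolding isometric_on_def
  proof (intro ballI)
    fix s t assume "s \<in> {p..q}" "t \<in> {p..q}"
    then have "s = t" using False by auto
    then show "dist (c s) (c t) = dist s t" by simp
  qed
qed

lemma isometric_on_atLeastAtMost_image_subset_convex:
  fixes c :: "real \<Rightarrow> 'x::metric_space"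
  assumes iso: "isometric_on {p..q} c" and "p \<le> q"
    and B: "convex_subspace B" "c p \<in> B" "c q \<in> B"
  shows "c ` {p..q} \<subseteq> B"
proof -
  have d: "dist (c p) (c q) = q - p"
    using iso \<open>p \<le> q\<close> unfolding isometric_on_def by (simp add: dist_real_def)
  have "geodesic_from (\<lambda>r. c (p + r)) (c p) (c q)"
    unfolding geodesic_from_def isometric_on_def d
  proof (intro conjI ballI)
    fix r r' assume "r \<in> {0..q - p}" "r' \<in> {0..q - p}"
    then have "p + r \<in> {p..q}" "p + r' \<in> {p..q}" by auto
    then show "dist (c (p + r)) (c (p + r')) = dist r r'"
      using iso unfolding isometric_on_def by (simp add: dist_real_def)
  qed simp_all
  from B(1)[unfolded convex_subspace_def, rule_format, OF B(2,3) this]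
  have segment: "(\<lambda>r. c (p + r)) ` {0..q - p} \<subseteq> B" unfolding d .
  show ?thesis
  proof (rule image_subsetI)
    fix s assume "s \<in> {p..q}"
    then have "s - p \<in> {0..q - p}" by simp
    from subsetD[OF segment imageI[OF this]] show "c s \<in> B" by simp
  qed
qed

lemma generalized_geodesicE:
  assumes "generalized_geodesic c"
  obtains a b :: ereal where "a \<le> b" "continuous_on UNIV c"
    "isometric_on {t. a < ereal t \<and> ereal t < b} c"
    "locally_constant_on (- {t. a < ereal t \<and> ereal t < b}) c"
  using assms unfolding generalized_geodesic_def Let_def by blast

lemma locally_constant_below_ereal_interval:
  assumes "locally_constant_on (- {t. a < ereal t \<and> ereal t < b}) c" "ereal s \<le> a" "ereal s' \<le> a"
  shows "c s = c s'"
  using assms by (intro locally_constant_on_imp_constant_on_interval[OF assms(1) is_interval_ereal_le])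
    auto

lemma locally_constant_above_ereal_interval:
  assumes "locally_constant_on (- {t. a < ereal t \<and> ereal t < b}) c" "b \<le> ereal s" "b \<le> ereal s'"
  shows "c s = c s'"
  using assms by (intro locally_constant_on_imp_constant_on_interval[OF assms(1) is_interval_ereal_ge])
    auto

lemma locally_constant_up_to_max:
  assumes lcon: "locally_constant_on (- {t. a < ereal t \<and> ereal t < b}) c"
    and p: "ereal p = max a (ereal u)" and t: "t \<in> {u..p}"
  shows "c t = c p"
proof (cases "a \<le> ereal u")
  case True
  then have "p = u" using p by (simp add: max_absorb2)
  then show ?thesis using t by simp
next
  case False
  then have "ereal p = a" using p by (simp add: max_absorb1)
  moreover have "ereal t \<le> ereal p" using t by simp
  ultimately show ?thesis by (intro locally_constant_below_ereal_interval[OF lcon]) simp_all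
qed

lemma locally_constant_from_min:
  assumes lcon: "locally_constant_on (- {t. a < ereal t \<and> ereal t < b}) c"
    and q: "ereal q = min b (ereal v)" and t: "t \<in> {q..v}"
  shows "c t = c q"
proof (cases "ereal v \<le> b")
  case True
  then have "q = v" using q by (simp add: min_absorb2)
  then show ?thesis using t by simp
next
  case False
  then have "ereal q = b" using q by (simp add: min_absorb1)
  moreover have "ereal q \<le> ereal t" using t by simp
  ultimately show ?thesis by (intro locally_constant_above_ereal_interval[OF lcon]) simp_all
qed

lemma ereal_bounded_eq_real:
  fixes x :: ereal
  assumes "ereal u \<le> x" "x \<le> ereal v"
  shows "ereal (real_of_ereal x) = x"
  using assms by (cases x) auto

lemma generalized_geodesic_interval_decomposition:
  fixes c :: "real \<Rightarrow> 'x::metric_space"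
  assumes gg: "generalized_geodesic c" and "u \<le> v"
  obtains p q where "u \<le> p" "p \<le> q" "q \<le> v" "isometric_on {p..q} c"
    "\<And>t. t \<in> {u..p} \<Longrightarrow> c t = c p" "\<And>t. t \<in> {q..v} \<Longrightarrow> c t = c q"
proof -
  obtain a b :: ereal where "a \<le> b" and cont: "continuous_on UNIV c"
    and iso: "isometric_on {t. a < ereal t \<and> ereal t < b} c"
    and lcon: "locally_constant_on (- {t. a < ereal t \<and> ereal t < b}) c"
    using gg by (rule generalized_geodesicE)
  note const_below = locally_constant_below_ereal_interval[OF lcon]
  note const_above = locally_constant_above_ereal_interval[OF lcon]
  have isometric_point: "isometric_on {r..r} c" for r
    unfolding isometric_on_def by simp
  have uv: "ereal u \<le> ereal v" using \<open>u \<le> v\<close> by simp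
  consider "ereal v \<le> a" | "b \<le> ereal u" | "a < ereal v" "ereal u < b"
    using not_le by blast
  then show ?thesis
  proof cases
    case 1
    show ?thesis
    proof (rule that[of u u])
      show "c t = c u" if "t \<in> {u..v}" for t
      proof (rule const_below)
        show "ereal t \<le> a" using order_trans[OF _ 1, of "ereal t"] that by simp
        show "ereal u \<le> a" using order_trans[OF uv 1] .
      qed
    qed (use \<open>u \<le> v\<close> isometric_point in auto)
  next
    case 2
    show ?thesis
    proof (rule that[of v v])
      show "c t = c v" if "t \<in> {u..v}" for t
      proof (rule const_above)
        show "b \<le> ereal t" using order_trans[OF 2, of "ereal t"] that by simp
        show "b \<le> ereal v" using order_trans[OF 2 uv] .
      qed
    qed (use \<open>u \<le> v\<close> isometric_point in auto)
  next
    case 3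
    define p where "p = real_of_ereal (max a (ereal u))"
    define q where "q = real_of_ereal (min b (ereal v))"
    have p_eq: "ereal p = max a (ereal u)"
      unfolding p_def using 3 uv by (intro ereal_bounded_eq_real[of u _ v]) auto
    have q_eq: "ereal q = min b (ereal v)"
      unfolding q_def using 3 uv by (intro ereal_bounded_eq_real[of u _ v]) auto
    have "ereal u \<le> ereal p" "ereal p \<le> ereal q" "ereal q \<le> ereal v"
      unfolding p_eq q_eq using 3 uv \<open>a \<le> b\<close> by (auto simp: max_def min_def)
    then have "u \<le> p" "p \<le> q" "q \<le> v" by simp_all
    moreover have "{p<..<q} \<subseteq> {t. a < ereal t \<and> ereal t < b}"
    proof
      fix x assume "x \<in> {p<..<q}"
      then have "ereal p < ereal x" "ereal x < ereal q" by simp_all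
      then have "a < ereal x" "ereal x < b" unfolding p_eq q_eq by simp_all
      then show "x \<in> {t. a < ereal t \<and> ereal t < b}" by simp
    qed
    then have "isometric_on {p..q} c"
      by (intro isometric_on_atLeastAtMost[OF cont] isometric_on_subset[OF iso])
    moreover note locally_constant_up_to_max[OF lcon p_eq] locally_constant_from_min[OF lcon q_eq]
    ultimately show ?thesis by (rule that)
  qed
qed

lemma generalized_geodesic_image_subset_convex:
  fixes c :: "real \<Rightarrow> 'x::metric_space"
  assumes gg: "generalized_geodesic c" and B: "convex_subspace B" "c u \<in> B" "c v \<in> B"
  shows "c ` {u..v} \<subseteq> B"
proof (cases "u \<le> v")
  case True
  obtain p q where pq: "u \<le> p" "p \<le> q" "q \<le> v" "isometric_on {p..q} c"
    and const: "\<And>t. t \<in> {u..p} \<Longrightarrow> c t = c p" "\<And>t. t \<in> {q..v} \<Longrightarrow> c t = c q"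
    using generalized_geodesic_interval_decomposition[OF gg True] by blast
  have "c p \<in> B" using const(1)[of u] pq B by simp
  moreover have "c q \<in> B" using const(2)[of v] pq B by simp
  ultimately have middle: "c ` {p..q} \<subseteq> B"
    using pq B(1) by (intro isometric_on_atLeastAtMost_image_subset_convex)
  show ?thesis
  proof (rule image_subsetI)
    fix t assume t: "t \<in> {u..v}"
    consider "t \<in> {u..p}" | "t \<in> {p..q}" | "t \<in> {q..v}" using t by fastforce
    then show "c t \<in> B"
    proof cases
      case 1
      then show ?thesis using const(1) \<open>c p \<in> B\<close> by metis
    next
      case 2
      then show ?thesis using middle by blast
    next
      case 3
      then show ?thesis using const(2) \<open>c q \<in> B\<close> by metis
    qed
  qed
qed simp

lemma locally_constant_on_compose:
  assumes "locally_constant_on S f"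
  shows "locally_constant_on S (\<lambda>t. h (f t))"
  unfolding locally_constant_on_def
proof
  fix t assume "t \<in> S"
  then obtain e where "e > 0" "\<forall>s\<in>S. \<bar>s - t\<bar> < e \<longrightarrow> f s = f t"
    using assms unfolding locally_constant_on_def by blast
  then show "\<exists>e>0. \<forall>s\<in>S. \<bar>s - t\<bar> < e \<longrightarrow> h (f s) = h (f t)" by auto
qed

lemma generalized_geodesic_act:
  assumes isom: "isometric_act G act" and g: "g \<in> carrier G" and gg: "generalized_geodesic c"
  shows "generalized_geodesic (\<lambda>t. act g (c t))"
proof -
  have dist_act: "dist (act g x) (act g y) = dist x y" for x y
    using isom g unfolding isometric_act_def by blast
  obtain a b :: ereal where "a \<le> b" and cont: "continuous_on UNIV c"
    and iso: "isometric_on {t. a < ereal t \<and> ereal t < b} c"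
    and lcon: "locally_constant_on (- {t. a < ereal t \<and> ereal t < b}) c"
    using gg by (rule generalized_geodesicE)
  moreover have "continuous_on UNIV (act g)"
    unfolding continuous_on_iff using dist_act by metis
  then have "continuous_on UNIV (\<lambda>t. act g (c t))"
    using cont by (rule continuous_on_compose2) simp
  moreover have "isometric_on {t. a < ereal t \<and> ereal t < b} (\<lambda>t. act g (c t))"
    using iso unfolding isometric_on_def dist_act .
  ultimately show ?thesis
    unfolding generalized_geodesic_def Let_def using locally_constant_on_compose[OF lcon] by blast
qed

lemma orbit_set_FS_subset:
  assumes "isometric_act G act"
  shows "orbit_set G act (FS A) \<subseteq> FS UNIV"
proof
  fix e assume "e \<in> orbit_set G act (FS A)"
  then obtain g e' where "g \<in> carrier G" "e' \<in> FS A" "e = (\<lambda>t. act g (e' t))"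
    unfolding orbit_set_def by blast
  then show "e \<in> FS UNIV" unfolding FS_def using generalized_geodesic_act[OF assms] by simp
qed

lemma group_act_inv_cancel:
  assumes "group G" "group_act G act" "g \<in> carrier G"
  shows "act (inv\<^bsub>G\<^esub> g) (act g y) = y"
  using assms unfolding group_act_def by (metis group.inv_closed group.l_inv)

lemma orbit_setI:
  assumes "group G" "group_act G act" "k \<in> carrier G" "(\<lambda>t. act k (c t)) \<in> C"
  shows "c \<in> orbit_set G act C"
proof -
  define e where "e = (\<lambda>t. act k (c t))"
  have "c = (\<lambda>t. act (inv\<^bsub>G\<^esub> k) (e t))"
    unfolding e_def using group_act_inv_cancel[OF assms(1-3)] by simp
  moreover have "inv\<^bsub>G\<^esub> k \<in> carrier G" using assms by (simp add: group.inv_closed)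
  moreover have "e \<in> C" using assms(4) unfolding e_def .
  ultimately show ?thesis unfolding orbit_set_def by blast
qed

lemma compactin_pointwise_fix_singleton:
  assumes "proper_act G T act"
  shows "compactin T (pointwise_fix G act {p})"
proof -
  have "compactin T {g \<in> carrier G. act g ` {p} \<inter> {p} \<noteq> {}}"
    using assms compact_sing[of p] unfolding proper_act_def by blast
  moreover have "{g \<in> carrier G. act g ` {p} \<inter> {p} \<noteq> {}} = pointwise_fix G act {p}"
    unfolding pointwise_fix_def by auto
  ultimately show ?thesis by metis
qed

lemma continuous_map_act_at:
  assumes "proper_act G T act"
  shows "continuous_map T euclidean (\<lambda>g. act g y)"
proof -
  have "continuous_map T (prod_topology T euclidean) (\<lambda>g. (g, y))"
    by (intro continuous_map_pairedI continuous_map_id) simp_all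
  moreover have "continuous_map (prod_topology T euclidean) euclidean (\<lambda>(g, x). act g x)"
    using assms unfolding proper_act_def by blast
  ultimately have "continuous_map T euclidean ((\<lambda>(g, x). act g x) \<circ> (\<lambda>g. (g, y)))"
    by (rule continuous_map_compose)
  then show ?thesis by (simp add: o_def)
qed

lemma closedin_maps_into_closed:
  assumes "\<And>y. y \<in> Y \<Longrightarrow> continuous_map X euclidean (\<lambda>g. f g y)" and "closed C"
  shows "closedin X {g \<in> topspace X. f g ` Y \<subseteq> C}"
proof -
  have eq: "{g \<in> topspace X. f g ` Y \<subseteq> C} =
      \<Inter> (insert (topspace X) ((\<lambda>y. {g \<in> topspace X. f g y \<in> C}) ` Y))"
    by auto
  have closed_y: "closedin X {g \<in> topspace X. f g y \<in> C}" if "y \<in> Y" for y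
    using closedin_continuous_map_preimage[OF assms(1)[OF that]] assms(2) by simp
  show ?thesis unfolding eq
  proof (rule closedin_Inter)
    fix S assume "S \<in> insert (topspace X) ((\<lambda>y. {g \<in> topspace X. f g y \<in> C}) ` Y)"
    then consider "S = topspace X" | y where "y \<in> Y" "S = {g \<in> topspace X. f g y \<in> C}"
      by blast
    then show "closedin X S" by cases (use closed_y in simp_all)
  qed simp
qed

lemma pointwise_fix_maps_Union_into_closed:
  assumes proper: "proper_act G T act" and C: "closed C" and Y: "incseq Y"
    and fix_n: "\<And>n. \<exists>g\<in>pointwise_fix G act {p}. act g ` Y n \<subseteq> C"
  shows "\<exists>g\<in>pointwise_fix G act {p}. act g ` (\<Union>n. Y n) \<subseteq> C"
proof -
  define X where "X = subtopology T (pointwise_fix G act {p})"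
  define F where "F n = {g \<in> topspace X. act g ` Y n \<subseteq> C}" for n
  have cpt: "compactin T (pointwise_fix G act {p})"
    using proper by (rule compactin_pointwise_fix_singleton)
  then have topX: "topspace X = pointwise_fix G act {p}"
    unfolding X_def by (simp add: compactin_subset_topspace inf.absorb2)
  have "(\<Inter>n. F n) \<noteq> {}"
  proof (rule compact_space_imp_nest)
    show "compact_space X" unfolding X_def using cpt by (rule compact_space_subtopology)
    show "closedin X (F n)" for n
      unfolding F_def X_def
      using continuous_map_act_at[OF proper] C
      by (intro closedin_maps_into_closed continuous_map_from_subtopology)
    show "F n \<noteq> {}" for n using fix_n unfolding F_def topX by blast
    show "decseq F" using Y unfolding F_def decseq_def incseq_def by blast
  qed
  then show ?thesis unfolding F_def topX by blast
qed

lemma incseq_image_symmetric_intervals: "incseq (\<lambda>n. f ` {- real n..real n})"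
  unfolding incseq_def by (intro allI impI image_mono) auto

lemma Union_image_symmetric_intervals: "(\<Union>n. f ` {- real n..real n}) = range f"
proof -
  have "t \<in> (\<Union>n. {- real n..real n})" for t
  proof -
    obtain n :: nat where "\<bar>t\<bar> \<le> real n" using real_arch_simple by blast
    then have "t \<in> {- real n..real n}" by auto
    then show ?thesis by blast
  qed
  then show ?thesis by blast
qed

lemma generalized_geodesic_translate_into_member:
  fixes act :: "'g \<Rightarrow> 'x::metric_space \<Rightarrow> 'x"
  assumes proper: "proper_act G T act"
    and closed_convex: "\<forall>A\<in>\<A>. closed A \<and> convex_subspace A"
    and transitive: "\<forall>A\<in>\<A>. \<forall>A'\<in>\<A>. \<exists>g\<in>carrier G. act g ` A = A' \<and> (\<forall>x\<in>A \<inter> A'. act g x = x)"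
    and covering: "\<forall>x y. \<exists>A\<in>\<A>. x \<in> A \<and> y \<in> A"
    and gg: "generalized_geodesic c"
  obtains A g where "A \<in> \<A>" "g \<in> carrier G" "range (\<lambda>t. act g (c t)) \<subseteq> A"
proof -
  have "\<forall>n::nat. \<exists>A. A \<in> \<A> \<and> c (- real n) \<in> A \<and> c (real n) \<in> A"
    using covering by blast
  then obtain An where An: "\<forall>n::nat. An n \<in> \<A> \<and> c (- real n) \<in> An n \<and> c (real n) \<in> An n"
    by (rule choice[THEN exE])
  then have An_mem: "An n \<in> \<A>" for n by blast
  have window: "c ` {- real n..real n} \<subseteq> An n" for n
    using An closed_convex by (intro generalized_geodesic_image_subset_convex[OF gg]) auto
  have fix_n: "\<exists>g\<in>pointwise_fix G act {c 0}. act g ` (c ` {- real n..real n}) \<subseteq> An 0" for n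
  proof -
    have "\<exists>g\<in>carrier G. act g ` An n = An 0 \<and> (\<forall>x\<in>An n \<inter> An 0. act g x = x)"
      by (rule transitive[rule_format, OF An_mem An_mem])
    then obtain g where g: "g \<in> carrier G" "act g ` An n = An 0" "\<forall>x\<in>An n \<inter> An 0. act g x = x"
      by blast
    have "c 0 \<in> An n \<inter> An 0" using window[of n] window[of 0] by auto
    then have "g \<in> pointwise_fix G act {c 0}" using g unfolding pointwise_fix_def by auto
    moreover have "act g ` (c ` {- real n..real n}) \<subseteq> An 0"
      using image_mono[OF window[of n], of "act g"] g(2) by simp
    ultimately show ?thesis by blast
  qed
  have "closed (An 0)" using An_mem closed_convex by blast
  then obtain g where "g \<in> pointwise_fix G act {c 0}" "act g ` range c \<subseteq> An 0"
    using pointwise_fix_maps_Union_into_closed[OF proper _ incseq_image_symmetric_intervals fix_n]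
    unfolding Union_image_symmetric_intervals by blast
  show ?thesis
  proof (rule that[OF An_mem])
    show "g \<in> carrier G" using \<open>g \<in> pointwise_fix G act {c 0}\<close> unfolding pointwise_fix_def by blast
    show "range (\<lambda>t. act g (c t)) \<subseteq> An 0"
      using \<open>act g ` range c \<subseteq> An 0\<close> by (simp add: image_image)
  qed
qed

theorem lemma2p3:
  fixes G :: "('g, 'm) monoid_scheme" and T :: "'g topology"
    and act :: "'g \<Rightarrow> 'x::metric_space \<Rightarrow> 'x"
    and \<A> :: "'x set set"
  assumes td: "td_group G T"
    and isom: "isometric_act G act"
    and proper: "proper_act G T act"
    and cocpt: "cocompact_act G act"
    and smooth: "smooth_act G T act"
    and lc: "locally_compact_space (euclidean :: 'x topology)"
    and cat0: "CAT0 TYPE('x)"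
    and closed_convex: "\<forall>A\<in>\<A>. closed A \<and> convex_subspace A"
    and a: "\<forall>A\<in>\<A>. \<forall>A'\<in>\<A>. \<exists>g\<in>carrier G. act g ` A = A' \<and> (\<forall>x\<in>A \<inter> A'. act g x = x)"
    and b: "\<forall>A\<in>\<A>. Gamma_discrete G T act A"
    and c: "\<forall>x y. \<exists>A\<in>\<A>. x \<in> A \<and> y \<in> A"
  shows "\<forall>A\<in>\<A>. orbit_set G act (FS A) = FS (UNIV :: 'x set)"
proof
  fix A assume A: "A \<in> \<A>"
  have grp: "group G" using td unfolding td_group_def topological_group_def by blast
  have gact: "group_act G act" using isom unfolding isometric_act_def by blast
  show "orbit_set G act (FS A) = FS UNIV"
  proof
    show "orbit_set G act (FS A) \<subseteq> FS UNIV" using isom by (rule orbit_set_FS_subset)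
    show "FS UNIV \<subseteq> orbit_set G act (FS A)"
    proof
      fix c0 :: "real \<Rightarrow> 'x" assume "c0 \<in> FS UNIV"
      then have gg: "generalized_geodesic c0" unfolding FS_def by blast
      obtain A0 g where A0: "A0 \<in> \<A>" and g: "g \<in> carrier G" "range (\<lambda>t. act g (c0 t)) \<subseteq> A0"
        by (rule generalized_geodesic_translate_into_member[OF proper closed_convex a c gg])
      have "\<exists>h\<in>carrier G. act h ` A0 = A \<and> (\<forall>x\<in>A0 \<inter> A. act h x = x)"
        by (rule a[rule_format, OF A0 A])
      then obtain h where h: "h \<in> carrier G" "act h ` A0 = A" by blast
      have k: "h \<otimes>\<^bsub>G\<^esub> g \<in> carrier G" using grp g h by (simp add: group.is_monoid monoid.m_closed)
      have "act (h \<otimes>\<^bsub>G\<^esub> g) (c0 t) = act h (act g (c0 t))" for t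
        using gact g h unfolding group_act_def by blast
      then have "(\<lambda>t. act (h \<otimes>\<^bsub>G\<^esub> g) (c0 t)) \<in> FS A"
        using generalized_geodesic_act[OF isom k gg] g h unfolding FS_def by auto
      then show "c0 \<in> orbit_set G act (FS A)" by (rule orbit_setI[OF grp gact k])
    qed
  qed
qed

end
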